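(* If an atomic flow $A$ is cycle-free and $A\to_{\mathsf w}^\star B$, then $B$ is cycle-free.
   Context: An atomic flow is a tuple $(V,E,\eta,up,lo)$: finite sets of vertices and edges, a labelling of vertices by interaction, cut, weakening, coweakening, contraction or cocontraction, and maps $up:E\to V\cup\{\top\}$, $lo:E\to V\cup\{\bot\}$. Upper edges of $\nu$: $lo(\epsilon)=\nu$; lower edges: $up(\epsilon)=\nu$. (Upper, lower) edge numbers: $(0,2)$ interaction, $(2,0)$ cut, $(0,1)$ weakening, $(1,0)$ coweakening, $(2,1)$ contraction, $(1,2)$ cocontraction; no directed cycles; there is $\pi:E\to\{+,-\}$ giving all edges of a (co)contraction the same sign and the two edges of an interaction/cut different signs. A path from $\nu$ to $\nu'$ is a sequence of edges $\epsilon_1,\dots,\epsilon_h$ with $lo(\epsilon_i)=up(\epsilon_{i+1})$, $up(\epsilon_1)=\nu$, $lo(\epsilon_h)=\nu'$; its reversal is a path from $\nu'$ to $\nu$. An $\mathsf{ai}$-path from $\nu$ to $\nu'$ is either a path from $\nu$ to $\nu'$ or a sequence $\epsilon_1,\dots,\epsilon_k,\epsilon_{k+1},\dots,\epsilon_h$ with $\epsilon_k\neq\epsilon_{k+1}$ such that, for some interaction or cut vertex $\nu''$, $\epsilon_1,\dots,\epsilon_k$ is an $\mathsf{ai}$-path from $\nu$ to $\nu''$ and $\epsilon_{k+1},\dots,\epsilon_h$ is an $\mathsf{ai}$-path from $\nu''$ to $\nu'$. An $\mathsf{ai}$-cycle is an $\mathsf{ai}$-path from a vertex to itself in which no edge appears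 twice. A flow is cycle-free if it has no $\mathsf{ai}$-cycle. $\to_{\mathsf w}^\star$ is the reflexive-transitive closure of $\to_{\mathsf w}$, where $A\to_{\mathsf w}B$ means $B$ results from $A$ by one application of one of these subgraph replacements: (i) a weakening whose lower edge is an upper edge of a contraction: delete both, merging the contraction's other upper edge and its lower edge into one edge; (ii) a coweakening whose upper edge is a lower edge of a cocontraction: delete both, merging the cocontraction's upper edge and other lower edge; (iii) a weakening whose lower edge is an upper edge of a cut: delete both, the cut's other upper edge becoming the upper edge of a new coweakening; (iv) an interaction one of whose lower edges is the upper edge of a coweakening: delete both, the other lower edge becoming the lower edge of a new weakening; (v) an edge from a weakening to a coweakening: delete it and both vertices; (vi) a weakening whose lower edge is the upper edge of a cocontraction: replace by two new weakenings whose lower edges are the cocontraction's lower edges; (vii) a coweakening whose upper edge is the lower edge of a contraction: replace by two new coweakenings whose upper edges are the contraction's upper edges. *)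

theory Defs
  imports Main
begin

datatype kind = Interaction | Cut | Weakening | Coweakening | Contraction | Cocontraction

(* up e = None means up(e) = top; lo e = None means lo(e) = bot *)
record ('v, 'e) flow =
  verts :: "'v set"
  edges :: "'e set"
  lab   :: "'v \<Rightarrow> kind"
  up    :: "'e \<Rightarrow> 'v option"
  lo    :: "'e \<Rightarrow> 'v option"

definition upper_edges :: "('v,'e) flow \<Rightarrow> 'v \<Rightarrow> 'e set" where
  "upper_edges F v = {e \<in> edges F. lo F e = Some v}"

definition lower_edges :: "('v,'e) flow \<Rightarrow> 'v \<Rightarrow> 'e set" where
  "lower_edges F v = {e \<in> edges F. up F e = Some v}"

fun n_upper :: "kind \<Rightarrow> nat" where
  "n_upper Interaction = 0" | "n_upper Cut = 2" | "n_upper Weakening = 0"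
| "n_upper Coweakening = 1" | "n_upper Contraction = 2" | "n_upper Cocontraction = 1"

fun n_lower :: "kind \<Rightarrow> nat" where
  "n_lower Interaction = 2" | "n_lower Cut = 0" | "n_lower Weakening = 1"
| "n_lower Coweakening = 0" | "n_lower Contraction = 1" | "n_lower Cocontraction = 2"

definition dpath :: "('v,'e) flow \<Rightarrow> 'v \<Rightarrow> 'e list \<Rightarrow> 'v \<Rightarrow> bool" where
  "dpath F v es v' \<longleftrightarrow> es \<noteq> [] \<and> set es \<subseteq> edges F \<and>
     up F (hd es) = Some v \<and> lo F (last es) = Some v' \<and>
     (\<forall>i. Suc i < length es \<longrightarrow> lo F (es ! i) \<noteq> None \<and> lo F (es ! i) = up F (es ! Suc i))"

definition is_path :: "('v,'e) flow \<Rightarrow> 'v \<Rightarrow> 'e list \<Rightarrow> 'v \<Rightarrow> bool" where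
  "is_path F v es v' \<longleftrightarrow> dpath F v es v' \<or> dpath F v' (rev es) v"

inductive ai_path :: "('v,'e) flow \<Rightarrow> 'v \<Rightarrow> 'e list \<Rightarrow> 'v \<Rightarrow> bool" for F where
  base: "is_path F v es v' \<Longrightarrow> ai_path F v es v'"
| join: "\<lbrakk> ai_path F v xs w; ai_path F w ys v'; w \<in> verts F;
           lab F w = Interaction \<or> lab F w = Cut; last xs \<noteq> hd ys \<rbrakk>
         \<Longrightarrow> ai_path F v (xs @ ys) v'"

definition ai_cycle :: "('v,'e) flow \<Rightarrow> 'v \<Rightarrow> 'e list \<Rightarrow> bool" where
  "ai_cycle F v es \<longleftrightarrow> ai_path F v es v \<and> distinct es"

definition cycle_free :: "('v,'e) flow \<Rightarrow> bool" where
  "cycle_free F \<longleftrightarrow> \<not> (\<exists>v es. ai_cycle F v es)"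

definition atomic_flow :: "('v,'e) flow \<Rightarrow> bool" where
  "atomic_flow F \<longleftrightarrow>
     finite (verts F) \<and> finite (edges F) \<and>
     (\<forall>e \<in> edges F. (\<forall>v. up F e = Some v \<longrightarrow> v \<in> verts F) \<and>
                     (\<forall>v. lo F e = Some v \<longrightarrow> v \<in> verts F)) \<and>
     (\<forall>v \<in> verts F. card (upper_edges F v) = n_upper (lab F v) \<and>
                     card (lower_edges F v) = n_lower (lab F v)) \<and>
     \<not> (\<exists>v es. dpath F v es v) \<and>
     (\<exists>\<pi> :: 'e \<Rightarrow> bool.
        (\<forall>v \<in> verts F. (lab F v = Contraction \<or> lab F v = Cocontraction) \<longrightarrow>
            (\<forall>e1 \<in> upper_edges F v \<union> lower_edges F v.
               \<forall>e2 \<in> upper_edges F v \<union> lower_edges F v. \<pi> e1 = \<pi> e2)) \<and>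
        (\<forall>v \<in> verts F. lab F v = Interaction \<longrightarrow>
            (\<forall>e1 \<in> lower_edges F v. \<forall>e2 \<in> lower_edges F v. e1 \<noteq> e2 \<longrightarrow> \<pi> e1 \<noteq> \<pi> e2)) \<and>
        (\<forall>v \<in> verts F. lab F v = Cut \<longrightarrow>
            (\<forall>e1 \<in> upper_edges F v. \<forall>e2 \<in> upper_edges F v. e1 \<noteq> e2 \<longrightarrow> \<pi> e1 \<noteq> \<pi> e2)))"

text \<open>One weakening-reduction step.  Newly created vertices/merged edges reuse names of
  deleted ones (the result is determined up to isomorphism).\<close>
inductive w_step :: "('v,'e) flow \<Rightarrow> ('v,'e) flow \<Rightarrow> bool" where
  w_contr: "\<lbrakk> w \<in> verts A; lab A w = Weakening; c \<in> verts A; lab A c = Contraction;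
      e \<in> edges A; up A e = Some w; lo A e = Some c;
      e' \<in> edges A; e' \<noteq> e; lo A e' = Some c;
      f \<in> edges A; up A f = Some c \<rbrakk>
   \<Longrightarrow> w_step A (A\<lparr> verts := verts A - {w, c}, edges := edges A - {e, f},
                    lo := (lo A)(e' := lo A f) \<rparr>)"
| cow_cocontr: "\<lbrakk> k \<in> verts A; lab A k = Coweakening; d \<in> verts A; lab A d = Cocontraction;
      e \<in> edges A; up A e = Some d; lo A e = Some k;
      e' \<in> edges A; e' \<noteq> e; up A e' = Some d;
      g \<in> edges A; lo A g = Some d \<rbrakk>
   \<Longrightarrow> w_step A (A\<lparr> verts := verts A - {k, d}, edges := edges A - {e, e'},
                    lo := (lo A)(g := lo A e') \<rparr>)"
| w_cut: "\<lbrakk> w \<in> verts A; lab A w = Weakening; c \<in> verts A; lab A c = Cut;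
      e \<in> edges A; up A e = Some w; lo A e = Some c \<rbrakk>
   \<Longrightarrow> w_step A (A\<lparr> verts := verts A - {w}, edges := edges A - {e},
                    lab := (lab A)(c := Coweakening) \<rparr>)"
| i_cow: "\<lbrakk> i \<in> verts A; lab A i = Interaction; k \<in> verts A; lab A k = Coweakening;
      e \<in> edges A; up A e = Some i; lo A e = Some k \<rbrakk>
   \<Longrightarrow> w_step A (A\<lparr> verts := verts A - {k}, edges := edges A - {e},
                    lab := (lab A)(i := Weakening) \<rparr>)"
| w_cow: "\<lbrakk> w \<in> verts A; lab A w = Weakening; k \<in> verts A; lab A k = Coweakening;
      e \<in> edges A; up A e = Some w; lo A e = Some k \<rbrakk>
   \<Longrightarrow> w_step A (A\<lparr> verts := verts A - {w, k}, edges := edges A - {e} \<rparr>)"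
| w_cocontr: "\<lbrakk> w \<in> verts A; lab A w = Weakening; d \<in> verts A; lab A d = Cocontraction;
      e \<in> edges A; up A e = Some w; lo A e = Some d;
      f1 \<in> edges A; f2 \<in> edges A; f1 \<noteq> f2; up A f1 = Some d; up A f2 = Some d \<rbrakk>
   \<Longrightarrow> w_step A (A\<lparr> edges := edges A - {e},
                    lab := (lab A)(d := Weakening), up := (up A)(f1 := Some w) \<rparr>)"
| contr_cow: "\<lbrakk> k \<in> verts A; lab A k = Coweakening; c \<in> verts A; lab A c = Contraction;
      e \<in> edges A; up A e = Some c; lo A e = Some k;
      g1 \<in> edges A; g2 \<in> edges A; g1 \<noteq> g2; lo A g1 = Some c; lo A g2 = Some c \<rbrakk>
   \<Longrightarrow> w_step A (A\<lparr> edges := edges A - {e},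
                    lab := (lab A)(c := Coweakening), lo := (lo A)(g1 := Some k) \<rparr>)"

end

theory Submission
  imports Defs
begin

text \<open>Each weakening step only deletes vertices and edges or fuses two consecutive edges into
  one, so every edge of the result stands for a nonempty directed path of the original, distinct
  edges standing for disjoint paths, and interaction and cut vertices of the result were already
  interaction or cut vertices.  Replacing each edge of an \<open>ai\<close>-cycle of the result by its path
  (reversed where the cycle traverses the edge backwards) yields an \<open>ai\<close>-cycle of the original:
  disjointness keeps all edges distinct, and in particular the two edges meeting at a junction.\<close>

lemma dpath_single: "dpath F v [x] v' \<longleftrightarrow> x \<in> edges F \<and> up F x = Some v \<and> lo F x = Some v'"
  by (auto simp: dpath_def)

lemma dpath_Cons:
  assumes "xs \<noteq> []"
  shows "dpath F v (x # xs) v' \<longleftrightarrow>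
    x \<in> edges F \<and> up F x = Some v \<and> (\<exists>u. lo F x = Some u \<and> dpath F u xs v')"
proof -
  have shift: "(\<forall>i. Suc i < length (x # xs) \<longrightarrow> P i) \<longleftrightarrow>
      P 0 \<and> (\<forall>j. Suc j < length xs \<longrightarrow> P (Suc j))" for P
    using assms by (auto simp: less_Suc_eq_0_disj) (metis not0_implies_Suc)
  have "(x # xs) ! Suc 0 = hd xs"
    using assms by (simp add: hd_conv_nth)
  then show ?thesis
    unfolding dpath_def shift using assms by auto
qed

lemma dpath_append:
  assumes "dpath F v xs u" "dpath F u ys v'"
  shows "dpath F v (xs @ ys) v'"
  using assms
proof (induction xs arbitrary: v)
  case Nil
  then show ?case by (simp add: dpath_def)
next
  case (Cons x xs)
  have "ys \<noteq> []" using Cons.prems(2) by (simp add: dpath_def)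
  show ?case
  proof (cases "xs = []")
    case True
    then show ?thesis using Cons.prems \<open>ys \<noteq> []\<close> by (simp add: dpath_single dpath_Cons)
  next
    case False
    then show ?thesis using Cons by (auto simp: dpath_Cons)
  qed
qed

lemma ai_path_edges: "ai_path F v es v' \<Longrightarrow> es \<noteq> [] \<and> set es \<subseteq> edges F"
  by (induction rule: ai_path.induct) (auto simp: is_path_def dpath_def)

definition path_embedding :: "('v,'e) flow \<Rightarrow> ('v,'e) flow \<Rightarrow> ('e \<Rightarrow> 'e list) \<Rightarrow> bool" where
  "path_embedding A B \<sigma> \<longleftrightarrow> verts B \<subseteq> verts A \<and>
    (\<forall>v\<in>verts B. lab B v \<in> {Interaction, Cut} \<longrightarrow> lab A v \<in> {Interaction, Cut}) \<and>
    (\<forall>x\<in>edges B. \<forall>u u'. up B x = Some u \<longrightarrow> lo B x = Some u' \<longrightarrow> dpath A u (\<sigma> x) u') \<and>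
    (\<forall>x\<in>edges B. \<sigma> x \<noteq> [] \<and> distinct (\<sigma> x)) \<and>
    (\<forall>x\<in>edges B. \<forall>y\<in>edges B. x \<noteq> y \<longrightarrow> set (\<sigma> x) \<inter> set (\<sigma> y) = {})"

lemma path_embeddingD:
  assumes "path_embedding A B \<sigma>"
  shows "verts B \<subseteq> verts A"
    "v \<in> verts B \<Longrightarrow> lab B v \<in> {Interaction, Cut} \<Longrightarrow> lab A v \<in> {Interaction, Cut}"
    "x \<in> edges B \<Longrightarrow> up B x = Some u \<Longrightarrow> lo B x = Some u' \<Longrightarrow> dpath A u (\<sigma> x) u'"
    "x \<in> edges B \<Longrightarrow> \<sigma> x \<noteq> []"
    "x \<in> edges B \<Longrightarrow> distinct (\<sigma> x)"
    "x \<in> edges B \<Longrightarrow> y \<in> edges B \<Longrightarrow> x \<noteq> y \<Longrightarrow> set (\<sigma> x) \<inter> set (\<sigma> y) = {}"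
  using assms unfolding path_embedding_def by blast+

lemma path_embedding_dpath:
  assumes "path_embedding A B \<sigma>" "dpath B v es v'"
  shows "dpath A v (concat (map \<sigma> es)) v'"
  using assms(2)
proof (induction es arbitrary: v)
  case Nil
  then show ?case by (simp add: dpath_def)
next
  case (Cons x xs)
  show ?case
  proof (cases "xs = []")
    case True
    then show ?thesis using Cons.prems path_embeddingD(3)[OF assms(1)] by (auto simp: dpath_single)
  next
    case False
    then obtain u where "x \<in> edges B" "up B x = Some v" "lo B x = Some u" "dpath B u xs v'"
      using Cons.prems by (auto simp: dpath_Cons)
    then have "dpath A v (\<sigma> x) u" using path_embeddingD(3)[OF assms(1)] by blast
    then show ?thesis using Cons.IH[OF \<open>dpath B u xs v'\<close>] by (simp add: dpath_append)
  qed
qed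

definition oriented :: "('e \<Rightarrow> 'e list) \<Rightarrow> 'e \<Rightarrow> 'e list \<Rightarrow> bool" where
  "oriented \<sigma> x l \<longleftrightarrow> l = \<sigma> x \<or> l = rev (\<sigma> x)"

lemma set_concat_oriented:
  "list_all2 (oriented \<sigma>) es ls \<Longrightarrow> set (concat ls) = (\<Union>x\<in>set es. set (\<sigma> x))"
  by (induction rule: list_all2_induct) (auto simp: oriented_def)

lemma hd_concat_oriented:
  "list_all2 (oriented \<sigma>) es ls \<Longrightarrow> es \<noteq> [] \<Longrightarrow> \<sigma> (hd es) \<noteq> [] \<Longrightarrow>
   hd (concat ls) \<in> set (\<sigma> (hd es))"
  by (induction rule: list_all2_induct) (auto simp: oriented_def hd_rev)

lemma last_concat_oriented:
  "list_all2 (oriented \<sigma>) es ls \<Longrightarrow> es \<noteq> [] \<Longrightarrow> \<sigma> (last es) \<noteq> [] \<Longrightarrow>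
   last (concat ls) \<in> set (\<sigma> (last es))"
proof -
  assume "list_all2 (oriented \<sigma>) es ls" "es \<noteq> []" "\<sigma> (last es) \<noteq> []"
  then have "list_all2 (oriented \<sigma>) (rev es) (map rev (rev ls))"
    by (auto simp: list_all2_rev1 list_all2_map2 oriented_def elim: list_all2_mono)
  then have "hd (concat (map rev (rev ls))) \<in> set (\<sigma> (hd (rev es)))"
    using \<open>es \<noteq> []\<close> \<open>\<sigma> (last es) \<noteq> []\<close> by (intro hd_concat_oriented) (auto simp: hd_rev)
  then show ?thesis by (simp add: rev_concat [symmetric] hd_rev rev_map)
qed

lemma distinct_concat_oriented:
  assumes "list_all2 (oriented \<sigma>) es ls" "distinct es" "\<forall>x\<in>set es. distinct (\<sigma> x)"
    "\<forall>x\<in>set es. \<forall>y\<in>set es. x \<noteq> y \<longrightarrow> set (\<sigma> x) \<inter> set (\<sigma> y) = {}"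
  shows "distinct (concat ls)"
  using assms
proof (induction rule: list_all2_induct)
  case Nil
  then show ?case by simp
next
  case (Cons x es l ls)
  have "set l = set (\<sigma> x)" "distinct l" using Cons by (auto simp: oriented_def)
  moreover have "set (\<sigma> x) \<inter> set (concat ls) = {}"
    using Cons.prems set_concat_oriented[OF Cons.hyps(2)] by auto
  ultimately show ?case using Cons by auto
qed

lemma path_embedding_ai_path:
  assumes "path_embedding A B \<sigma>" "ai_path B v es v'"
  shows "\<exists>ls. list_all2 (oriented \<sigma>) es ls \<and> ai_path A v (concat ls) v'"
  using assms(2)
proof (induction rule: ai_path.induct)
  case (base v es v')
  then consider "dpath B v es v'" | "dpath B v' (rev es) v" by (auto simp: is_path_def)
  then show ?case
  proof cases
    case 1
    have "list_all2 (oriented \<sigma>) es (map \<sigma> es)" by (simp add: list_all2_conv_all_nth oriented_def)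
    moreover have "ai_path A v (concat (map \<sigma> es)) v'"
      using path_embedding_dpath[OF assms(1) 1] by (simp add: ai_path.base is_path_def)
    ultimately show ?thesis by blast
  next
    case 2
    have "rev (concat (map (rev \<circ> \<sigma>) es)) = concat (map \<sigma> (rev es))"
      by (simp add: rev_concat rev_map comp_def)
    then have "ai_path A v (concat (map (rev \<circ> \<sigma>) es)) v'"
      using path_embedding_dpath[OF assms(1) 2] by (simp add: ai_path.base is_path_def)
    moreover have "list_all2 (oriented \<sigma>) es (map (rev \<circ> \<sigma>) es)"
      by (simp add: list_all2_conv_all_nth oriented_def)
    ultimately show ?thesis by blast
  qed
next
  case (join v xs w ys v')
  obtain l1 where l1: "list_all2 (oriented \<sigma>) xs l1" "ai_path A v (concat l1) w"
    using join.IH(1) by blast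
  obtain l2 where l2: "list_all2 (oriented \<sigma>) ys l2" "ai_path A w (concat l2) v'"
    using join.IH(2) by blast
  have "xs \<noteq> []" "ys \<noteq> []" "last xs \<in> edges B" "hd ys \<in> edges B"
    using ai_path_edges[OF join.hyps(1)] ai_path_edges[OF join.hyps(2)] by auto
  have "last (concat l1) \<in> set (\<sigma> (last xs))"
    using last_concat_oriented[OF l1(1) \<open>xs \<noteq> []\<close> path_embeddingD(4)[OF assms(1)]]
      \<open>last xs \<in> edges B\<close> .
  moreover have "hd (concat l2) \<in> set (\<sigma> (hd ys))"
    using hd_concat_oriented[OF l2(1) \<open>ys \<noteq> []\<close> path_embeddingD(4)[OF assms(1)]]
      \<open>hd ys \<in> edges B\<close> .
  moreover have "set (\<sigma> (last xs)) \<inter> set (\<sigma> (hd ys)) = {}"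
    using \<open>last xs \<in> edges B\<close> \<open>hd ys \<in> edges B\<close> join.hyps(5)
    by (rule path_embeddingD(6)[OF assms(1)])
  ultimately have "last (concat l1) \<noteq> hd (concat l2)" by (metis disjoint_iff)
  moreover have "w \<in> verts A" "lab A w = Interaction \<or> lab A w = Cut"
    using path_embeddingD(1,2)[OF assms(1)] join.hyps(3,4) by auto
  ultimately have "ai_path A v (concat l1 @ concat l2) v'"
    using ai_path.join[OF l1(2) l2(2)] by blast
  moreover have "list_all2 (oriented \<sigma>) (xs @ ys) (l1 @ l2)"
    using l1(1) l2(1) by (rule list_all2_appendI)
  ultimately show ?case by (metis concat_append)
qed

lemma path_embedding_cycle_free:
  assumes "path_embedding A B \<sigma>" "cycle_free A"
  shows "cycle_free B"
  unfolding cycle_free_def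
proof
  assume "\<exists>v es. ai_cycle B v es"
  then obtain v es where "ai_path B v es v" "distinct es" by (auto simp: ai_cycle_def)
  then obtain ls where ls: "list_all2 (oriented \<sigma>) es ls" "ai_path A v (concat ls) v"
    using path_embedding_ai_path[OF assms(1)] by blast
  have "set es \<subseteq> edges B" using ai_path_edges[OF \<open>ai_path B v es v\<close>] by blast
  then have "\<forall>x\<in>set es. distinct (\<sigma> x)"
    "\<forall>x\<in>set es. \<forall>y\<in>set es. x \<noteq> y \<longrightarrow> set (\<sigma> x) \<inter> set (\<sigma> y) = {}"
    using path_embeddingD(5,6)[OF assms(1)] by blast+
  then have "distinct (concat ls)"
    using distinct_concat_oriented[OF ls(1) \<open>distinct es\<close>] by blast
  then show False
    using ls(2) assms(2) by (auto simp: cycle_free_def ai_cycle_def)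
qed

lemma w_step_path_embedding: "w_step A B \<Longrightarrow> \<exists>\<sigma>. path_embedding A B \<sigma>"
proof (induction rule: w_step.induct)
  case (w_contr w A c e e' f)
  show ?case
    by (rule exI[of _ "\<lambda>x. if x = e' then [e', f] else [x]"])
       (use w_contr in \<open>auto simp: path_embedding_def dpath_single dpath_Cons\<close>)
next
  case (cow_cocontr k A d e e' g)
  show ?case
    by (rule exI[of _ "\<lambda>x. if x = g then [g, e'] else [x]"])
       (use cow_cocontr in \<open>auto simp: path_embedding_def dpath_single dpath_Cons\<close>)
next
  case (w_cut w A c e)
  show ?case
    by (rule exI[of _ "\<lambda>x. [x]"]) (use w_cut in \<open>auto simp: path_embedding_def dpath_single\<close>)
next
  case (i_cow i A k e)
  show ?case
    by (rule exI[of _ "\<lambda>x. [x]"]) (use i_cow in \<open>auto simp: path_embedding_def dpath_single\<close>)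
next
  case (w_cow w A k e)
  show ?case
    by (rule exI[of _ "\<lambda>x. [x]"]) (use w_cow in \<open>auto simp: path_embedding_def dpath_single\<close>)
next
  case (w_cocontr w A d e f1 f2)
  show ?case
    by (rule exI[of _ "\<lambda>x. if x = f1 then [e, f1] else [x]"])
       (use w_cocontr in \<open>auto simp: path_embedding_def dpath_single dpath_Cons\<close>)
next
  case (contr_cow k A c e g1 g2)
  show ?case
    by (rule exI[of _ "\<lambda>x. if x = g1 then [g1, e] else [x]"])
       (use contr_cow in \<open>auto simp: path_embedding_def dpath_single dpath_Cons\<close>)
qed

theorem proposition4p14:
  fixes A B :: "('v, 'e) flow"
  assumes "atomic_flow A"
    and "cycle_free A"
    and "w_step\<^sup>*\<^sup>* A B"
  shows "cycle_free B"
  using assms(3,2)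
proof (induction rule: rtranclp_induct)
  case base
  then show ?case .
next
  case (step B C)
  then show ?case using w_step_path_embedding path_embedding_cycle_free by blast
qed

end
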